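(* Let $p_\Gamma$ be continuous and quasiconcave, and let $H$ and $\Gamma$ be independent. Fix $R_c>0$. Then the function $R_s\mapsto ED_s(R_s,R_c)$ on $R_s\ge0$ is minimized at $$R_s=\tfrac12\log_2\!\big(1+(1+\bar\gamma(R_c))(2^{2R_c}-1)\big)-R_c .$$
   Context: $H\ge0$, $\Gamma\ge0$ are the channel and side-information gains with densities $p_H,p_\Gamma$. Logarithms base 2. Define $D_d(R,\gamma)=(\gamma+2^{2R})^{-1}$. For rates $R_s\ge0,R_c>0$ define the outage set $\mathcal O_s=\{(h,\gamma): R_c\ge\tfrac12\log_2(1+h)\}\cup\{(h,\gamma): R_c\le \tfrac12\log_2(1+\tfrac{2^{2(R_s+R_c)}-1}{1+\gamma})\}$ and the separate source-channel coding expected distortion $ED_s(R_s,R_c)=\mathrm E\big[D_d(R_s+R_c,\Gamma)\mathbf 1\{(H,\Gamma)\notin\mathcal O_s\}\big]+\mathrm E\big[D_d(0,\Gamma)\mathbf 1\{(H,\Gamma)\in\mathcal O_s\}\big]$. Target state $\bar\gamma(R)$: for continuous quasiconcave $p_\Gamma$ write the super-level sets as $[\gamma_l(\alpha),\gamma_r(\alpha)]=\{\gamma\ge0:p_\Gamma(\gamma)\ge\alpha\}$. For $R\ge0$, $\bar\gamma(R)=\gamma_l(\alpha^* )$ where $\alpha^*\in[0,\max p_\Gamma]$ solves $$\int_{\gamma_l(\alpha^* )}^\infty\frac{p_\Gamma(\gamma)-\alpha^*}{\big((1+\gamma_l(\alpha^* ))2^{2R}+\gamma-\gamma_l(\alpha^*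 )\big)^2}\,d\gamma=0 .$$ *)

theory Defs
  imports "HOL-Probability.Probability"
begin

definition Dd :: "real \<Rightarrow> real \<Rightarrow> real" where
  "Dd R g = 1 / (g + 2 powr (2 * R))"

definition outage_s :: "real \<Rightarrow> real \<Rightarrow> (real \<times> real) set" where
  "outage_s Rs Rc =
     {(h, g). Rc \<ge> 1/2 * log 2 (1 + h)} \<union>
     {(h, g). Rc \<le> 1/2 * log 2 (1 + (2 powr (2 * (Rs + Rc)) - 1) / (1 + g))}"

text \<open>Expected distortion of separate source-channel coding, for channel gain H and
  side-information gain G, random variables on the probability space M.\<close>
definition ED_s :: "'w measure \<Rightarrow> ('w \<Rightarrow> real) \<Rightarrow> ('w \<Rightarrow> real) \<Rightarrow> real \<Rightarrow> real \<Rightarrow> real" where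
  "ED_s M H G Rs Rc =
     (\<integral>\<omega>. Dd (Rs + Rc) (G \<omega>) * indicator (- outage_s Rs Rc) (H \<omega>, G \<omega>) \<partial>M)
   + (\<integral>\<omega>. Dd 0 (G \<omega>) * indicator (outage_s Rs Rc) (H \<omega>, G \<omega>) \<partial>M)"

definition quasiconcave_nonneg :: "(real \<Rightarrow> real) \<Rightarrow> bool" where
  "quasiconcave_nonneg p \<longleftrightarrow>
     (\<forall>x y t. 0 \<le> x \<longrightarrow> 0 \<le> y \<longrightarrow> 0 \<le> t \<longrightarrow> t \<le> 1 \<longrightarrow>
        min (p x) (p y) \<le> p (t * x + (1 - t) * y))"

definition gamma_l :: "(real \<Rightarrow> real) \<Rightarrow> real \<Rightarrow> real" where
  "gamma_l p a = Inf {g. 0 \<le> g \<and> a \<le> p g}"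

definition target_alpha :: "(real \<Rightarrow> real) \<Rightarrow> real \<Rightarrow> real \<Rightarrow> bool" where
  "target_alpha p R a \<longleftrightarrow>
     0 \<le> a \<and> a \<le> Sup (p ` {0..}) \<and>
     (LINT g:{gamma_l p a..}|lborel.
        (p g - a) / ((1 + gamma_l p a) * 2 powr (2 * R) + g - gamma_l p a)\<^sup>2) = 0"

end

theory Submission
  imports Defs
begin

text \<open>Write c = 2^(2 R_c) - 1. The channel is out of outage exactly when H > c and the
  side-information gain exceeds a threshold T that increases with R_s from 0 to infinity.
  By independence, ED_s = E[D_d(0, Gamma)] - P(H > c) F(T), where
  F(T) = int_T^oo p(g) (D_d(0, g) - D_d(R_s + R_c, g)) dg, so R_s is optimal exactly when its
  threshold maximises F. Differentiating under the integral sign gives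
  F'(T) = c int_T^oo (p(g) - p(T)) / (g + 1 + c (1 + T))^2 dg. Beyond the target state,
  p - alpha changes sign at most once by quasiconcavity, and comparing the weights
  1/(g + K)^2 with the one in the defining equation of alpha shows F' >= 0 before the
  target state and F' <= 0 after it. The rate in the theorem is the one whose threshold is
  the target state.\<close>

lemma mono_on_sign_change_mult_le:
  fixes w :: "real \<Rightarrow> real"
  assumes "mono_on S w" "g \<in> S" "r \<in> S" "g < r \<Longrightarrow> 0 \<le> q" "r < g \<Longrightarrow> q \<le> 0"
  shows "w g * q \<le> w r * q"
proof (cases g r rule: linorder_cases)
  case less
  then show ?thesis using assms by (intro mult_right_mono mono_onD[OF assms(1)]) auto
next
  case greater
  then show ?thesis using assms by (intro mult_right_mono_neg mono_onD[OF assms(1)]) auto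
qed simp

lemma shifted_ratio_mono:
  fixes a b :: real
  assumes "0 < a" "a \<le> b"
  shows "mono_on {0..} (\<lambda>g. ((g + a) / (g + b))\<^sup>2)"
proof (rule mono_onI, rule power_mono)
  fix x y :: real assume "x \<in> {0..}" "y \<in> {0..}" "x \<le> y"
  moreover have "(y + a) * (x + b) - (x + a) * (y + b) = (y - x) * (b - a)"
    by (simp add: algebra_simps)
  ultimately have "(x + a) * (y + b) \<le> (y + a) * (x + b)"
    using assms by (metis diff_ge_0_iff_ge mult_nonneg_nonneg)
  moreover have "0 < x + b" "0 < y + b" using assms \<open>x \<in> {0..}\<close> \<open>y \<in> {0..}\<close> by auto
  ultimately show "(x + a) / (x + b) \<le> (y + a) / (y + b)" by (simp add: divide_simps)
  show "0 \<le> (x + a) / (x + b)" using assms \<open>x \<in> {0..}\<close> by simp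
qed

lemma has_real_derivative_zero_if_quadratic_bound:
  fixes f :: "real \<Rightarrow> real"
  assumes "f u = 0" "\<And>y. y \<in> S \<Longrightarrow> \<bar>f y\<bar> \<le> K * (y - u)\<^sup>2"
  shows "(f has_real_derivative 0) (at u within S)"
  unfolding has_field_derivative_iff
proof (rule Lim_null_comparison)
  show "\<forall>\<^sub>F y in at u within S. norm ((f y - f u) / (y - u)) \<le> K * \<bar>y - u\<bar>"
    unfolding eventually_at_filter
  proof (intro always_eventually allI impI)
    fix y assume "y \<noteq> u" "y \<in> S"
    then show "norm ((f y - f u) / (y - u)) \<le> K * \<bar>y - u\<bar>" using assms
      by (simp add: abs_divide divide_le_eq power2_eq_square abs_mult_self_eq mult.assoc)
  qed
  show "((\<lambda>y. K * \<bar>y - u\<bar>) \<longlongrightarrow> 0) (at u within S)"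
    by (rule tendsto_eq_intros | simp)+
qed

lemma inverse_square_bounds:
  fixes g K :: real
  assumes "0 \<le> g" "1 \<le> K"
  shows "0 \<le> 1 / (g + K)\<^sup>2" "1 / (g + K)\<^sup>2 \<le> 1"
proof -
  have "1 \<le> g + K" using assms by simp
  then have "1 \<le> (g + K)\<^sup>2" by (simp add: one_le_power)
  then show "0 \<le> 1 / (g + K)\<^sup>2" "1 / (g + K)\<^sup>2 \<le> 1" by (auto simp: divide_le_eq)
qed

lemma second_order_inverse_expansion:
  fixes a b :: real
  assumes "a \<noteq> 0" "b \<noteq> 0"
  shows "- 1 / b = - 1 / a + (b - a) * (1 / a\<^sup>2) - (b - a)\<^sup>2 * (1 / (a\<^sup>2 * b))"
  using assms by (simp add: field_simps power2_eq_square)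

lemma set_integral_nonneg:
  fixes f :: "'a \<Rightarrow> real"
  assumes "\<And>x. x \<in> A \<Longrightarrow> 0 \<le> f x"
  shows "0 \<le> (LINT x:A|M. f x)"
  unfolding set_lebesgue_integral_def
  by (rule Bochner_Integration.integral_nonneg) (use assms in \<open>auto simp: indicator_def\<close>)

lemma set_integral_nonpos:
  fixes f :: "'a \<Rightarrow> real"
  assumes "\<And>x. x \<in> A \<Longrightarrow> f x \<le> 0"
  shows "(LINT x:A|M. f x) \<le> 0"
  using set_integral_nonneg[of A "\<lambda>x. - f x" M] assms by (simp add: set_lebesgue_integral_def)

lemma set_integral_mono_set:
  fixes f :: "'a \<Rightarrow> real"
  assumes "set_integrable M B f" "A \<subseteq> B" "A \<in> sets M" "\<And>x. x \<in> B \<Longrightarrow> 0 \<le> f x"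
  shows "(LINT x:A|M. f x) \<le> (LINT x:B|M. f x)"
  using set_integrable_subset[OF assms(1,3,2)] assms(1) assms(2,4)
  unfolding set_lebesgue_integral_def set_integrable_def
  by (intro integral_mono) (auto simp: indicator_def)

lemma set_integral_greaterThan_split:
  fixes f :: "real \<Rightarrow> real"
  assumes "set_integrable lborel {a<..} f" "a \<le> b"
  shows "(LINT g:{a<..}|lborel. f g) = (LINT g:{a<..b}|lborel. f g) + (LINT g:{b<..}|lborel. f g)"
proof -
  have "{a<..} = {a<..b} \<union> {b<..}" using assms(2) by auto
  moreover have "set_integrable lborel {a<..b} f" "set_integrable lborel {b<..} f"
    using assms by (auto intro: set_integrable_subset)
  ultimately show ?thesis by (metis set_integral_Un greaterThanAtMost_iff greaterThan_iff
      disjoint_iff not_less)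
qed

lemma set_integral_inverse_square_greaterThan:
  fixes u K :: real
  assumes "0 < u + K"
  shows "set_integrable lborel {u<..} (\<lambda>g. 1 / (g + K)\<^sup>2)"
    and "(LINT g:{u<..}|lborel. 1 / (g + K)\<^sup>2) = 1 / (u + K)"
proof -
  let ?F = "\<lambda>x. - 1 / (x + K)"
  have D: "DERIV ?F x :> 1 / (x + K)\<^sup>2" if "ereal u < ereal x" for x
    using that assms by (auto intro!: derivative_eq_intros simp: power2_eq_square)
  have C: "isCont (\<lambda>g. 1 / (g + K)\<^sup>2) x" if "ereal u < ereal x" for x
    using that assms by (intro continuous_intros) auto
  have A: "((?F \<circ> real_of_ereal) \<longlongrightarrow> - 1 / (u + K)) (at_right (ereal u))"
    unfolding ereal_tendsto_simps1 using assms
    by (intro tendsto_within_subset[OF isCont_tendsto_compose[OF _ tendsto_ident_at]])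
      (auto intro!: continuous_intros)
  have "filterlim (\<lambda>x. x + K) at_top at_top"
    by (subst add.commute) (rule filterlim_tendsto_add_at_top[OF tendsto_const filterlim_ident])
  then have B: "((?F \<circ> real_of_ereal) \<longlongrightarrow> 0) (at_left \<infinity>)"
    unfolding ereal_tendsto_simps1
    by (intro tendsto_divide_0[OF tendsto_const] filterlim_at_top_imp_at_infinity)
  note FTC = interval_integral_FTC_nonneg[of "ereal u" \<infinity>, OF _ D C _ A B]
  show "set_integrable lborel {u<..} (\<lambda>g. 1 / (g + K)\<^sup>2)" using FTC(1) by simp
  show "(LINT g:{u<..}|lborel. 1 / (g + K)\<^sup>2) = 1 / (u + K)"
    using FTC(2) by (simp add: interval_integral_to_infinity_eq)
qed

lemma quasiconcave_nonneg_between: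
  assumes "quasiconcave_nonneg p" "0 \<le> x" "x \<le> y" "y \<le> z"
  shows "min (p x) (p z) \<le> p y"
proof (cases "x = z")
  case True
  then show ?thesis using assms by auto
next
  case False
  define t where "t = (z - y) / (z - x)"
  have "0 \<le> t" "t \<le> 1" using assms False by (auto simp: t_def field_simps)
  moreover have "t * x + (1 - t) * z = z - t * (z - x)" by (simp add: algebra_simps)
  then have "t * x + (1 - t) * z = y" using False by (simp add: t_def)
  ultimately show ?thesis using assms unfolding quasiconcave_nonneg_def by (metis order.trans)
qed

lemma quasiconcave_nonneg_single_crossing:
  assumes qc: "quasiconcave_nonneg p" and t: "0 \<le> t" "\<alpha> \<le> p t"
  obtains r where "t \<le> r" "\<And>g. t < g \<Longrightarrow> g < r \<Longrightarrow> \<alpha> \<le> p g" "\<And>g. r < g \<Longrightarrow> p g \<le> \<alpha>"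
  | "\<And>g. t < g \<Longrightarrow> \<alpha> \<le> p g"
proof (cases "\<exists>g>t. p g < \<alpha>")
  case True
  define N where "N = {g. t < g \<and> p g < \<alpha>}"
  have ne: "N \<noteq> {}" and bdd: "bdd_below N"
    using True by (auto simp: N_def intro!: bdd_belowI[of _ t])
  show ?thesis
  proof (rule that(1)[of "Inf N"])
    show "t \<le> Inf N" by (rule cInf_greatest[OF ne]) (auto simp: N_def)
    show "\<alpha> \<le> p g" if "t < g" "g < Inf N" for g
      using cInf_lower[OF _ bdd, of g] that by (force simp: N_def)
    show "p g \<le> \<alpha>" if "Inf N < g" for g
    proof -
      obtain n where "n \<in> N" "n < g" using \<open>Inf N < g\<close> cInf_less_iff[OF ne bdd] by auto
      then have "min (p t) (p g) \<le> p n"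
        by (intro quasiconcave_nonneg_between[OF qc t(1)]) (auto simp: N_def)
      then show ?thesis using t(2) \<open>n \<in> N\<close> by (auto simp: N_def)
    qed
  qed
next
  case False
  then show ?thesis using that(2) by (meson not_le)
qed

locale quasiconcave_density =
  fixes p :: "real \<Rightarrow> real"
  assumes nonneg: "\<And>x. 0 \<le> p x"
    and measurable[measurable]: "p \<in> borel_measurable lborel"
    and continuous: "continuous_on {0..} p"
    and quasiconcave: "quasiconcave_nonneg p"
    and integrable: "set_integrable lborel {0..} p"
    and total: "(LINT g:{0..}|lborel. p g) = 1"
begin

lemma set_integrable_mult_bounded:
  assumes "A \<in> sets lborel" "A \<subseteq> {0..}" "h \<in> borel_measurable lborel" "\<And>g. g \<in> A \<Longrightarrow> \<bar>h g\<bar> \<le> B"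
  shows "set_integrable lborel A (\<lambda>g. p g * h g)"
proof (rule set_integrable_bound[where f="\<lambda>g. B * p g"])
  show "set_integrable lborel A (\<lambda>g. B * p g)"
    using set_integrable_subset[OF integrable assms(1,2)] by simp
  show "set_borel_measurable lborel A (\<lambda>g. p g * h g)"
    using assms(1,3) unfolding set_borel_measurable_def by measurable
  have "norm (p g * h g) \<le> norm (B * p g)" if "g \<in> A" for g
    using assms(4)[OF that] nonneg[of g]
    by (simp add: abs_mult) (metis mult.commute mult_left_mono)
  then show "AE g in lborel. g \<in> A \<longrightarrow> norm (p g * h g) \<le> norm (B * p g)" by simp
qed

definition tail_expectation :: "(real \<Rightarrow> real) \<Rightarrow> real \<Rightarrow> real" where
  "tail_expectation h y = (LINT g:{y<..}|lborel. p g * h g)"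

lemma tail_expectation_bounds:
  assumes "0 \<le> y" "h \<in> borel_measurable lborel" "\<And>g. 0 \<le> g \<Longrightarrow> 0 \<le> h g \<and> h g \<le> 1"
  shows "0 \<le> tail_expectation h y" "tail_expectation h y \<le> 1"
proof -
  have ph: "0 \<le> p g * h g" "p g * h g \<le> p g" if "g \<in> {y<..}" for g
    using assms(1) assms(3)[of g] nonneg[of g] that by (auto intro: mult_left_le)
  have "set_integrable lborel {y<..} (\<lambda>g. p g * h g)"
    by (rule set_integrable_mult_bounded[OF _ _ assms(2), of _ 1]) (use assms(1,3) in force)+
  moreover have "set_integrable lborel {y<..} p"
    using assms(1) by (intro set_integrable_subset[OF integrable]) auto
  ultimately have "tail_expectation h y \<le> (LINT g:{y<..}|lborel. p g)"
    unfolding tail_expectation_def using ph(2) by (rule set_integral_mono)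
  also have "\<dots> \<le> (LINT g:{0..}|lborel. p g)"
    using assms(1) nonneg by (intro set_integral_mono_set[OF integrable]) auto
  finally show "tail_expectation h y \<le> 1" using total by simp
  show "0 \<le> tail_expectation h y"
    unfolding tail_expectation_def using ph(1) by (rule set_integral_nonneg)
qed

lemma tail_expectation_has_derivative:
  assumes "h \<in> borel_measurable lborel" "continuous_on {0..} h"
    and "\<And>g. 0 \<le> g \<Longrightarrow> \<bar>h g\<bar> \<le> B" and x: "0 \<le> x" "x \<le> b"
  shows "(tail_expectation h has_real_derivative - (p x * h x)) (at x within {0..b})"
proof -
  let ?f = "\<lambda>g. p g * h g"
  have int: "set_integrable lborel {0..} ?f"
    by (rule set_integrable_mult_bounded[OF _ _ assms(1)]) (use assms(3) in auto)
  have tail: "tail_expectation h y = (LINT g:{0..}|lborel. ?f g) - integral {0..y} ?f"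
    if "0 \<le> y" for y
  proof -
    have i: "set_integrable lborel {0..y} ?f" "set_integrable lborel {y<..} ?f"
      using that by (auto intro: set_integrable_subset[OF int])
    have "(LINT g:{0..y} \<union> {y<..}|lborel. ?f g) = (LINT g:{0..y}|lborel. ?f g) + tail_expectation h y"
      unfolding tail_expectation_def by (rule set_integral_Un[OF _ i]) auto
    moreover have "{0..y} \<union> {y<..} = {0..}" using that by auto
    ultimately have "(LINT g:{0..}|lborel. ?f g) = (LINT g:{0..y}|lborel. ?f g) + tail_expectation h y"
      by simp
    then show ?thesis using set_borel_integral_eq_integral(2)[OF i(1)] by simp
  qed
  have "continuous_on {0..b} ?f"
    by (intro continuous_intros continuous_on_subset[OF continuous]
        continuous_on_subset[OF assms(2)]) auto
  then have "((\<lambda>y. (LINT g:{0..}|lborel. ?f g) - integral {0..y} ?f) has_real_derivative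
      0 - ?f x) (at x within {0..b})"
    by (intro DERIV_diff DERIV_const integral_has_real_derivative) (use x in auto)
  then have "((\<lambda>y. (LINT g:{0..}|lborel. ?f g) - integral {0..y} ?f) has_real_derivative
      - ?f x) (at x within {0..b})" by simp
  then show ?thesis
  proof (rule has_field_derivative_transform_within[where d=1])
    show "(LINT g:{0..}|lborel. ?f g) - integral {0..y} ?f = tail_expectation h y"
      if "y \<in> {0..b}" "dist y x < 1" for y
      using tail[of y] that by simp
  qed (use x in auto)
qed

lemma exists_maximum: "\<exists>x\<ge>0. \<forall>y\<ge>0. p y \<le> p x"
proof -
  have "\<exists>x0\<ge>0. 0 < p x0"
  proof (rule ccontr)
    assume "\<not> ?thesis"
    then have "(\<lambda>x. indicator {0..} x *\<^sub>R p x) = (\<lambda>_. 0)"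
      using nonneg by (auto simp: indicator_def fun_eq_iff not_less order.antisym)
    then have "(LINT g:{0..}|lborel. p g) = 0" unfolding set_lebesgue_integral_def by simp
    then show False using total by simp
  qed
  then obtain x0 where x0: "0 \<le> x0" "0 < p x0" by blast
  define m where "m = p x0"
  txt \<open>Otherwise quasiconcavity keeps p above m on [x0, oo), contradicting total mass 1.\<close>
  have "\<exists>N\<ge>x0. \<forall>g\<ge>N. p g \<le> m"
  proof (rule ccontr)
    assume unbounded: "\<not> ?thesis"
    have above: "m \<le> p y" if y: "x0 \<le> y" for y
    proof -
      obtain g where "y \<le> g" "m < p g" using unbounded y by (meson not_le)
      then show ?thesis
        using quasiconcave_nonneg_between[OF quasiconcave x0(1) y \<open>y \<le> g\<close>] by (simp add: m_def)
    qed
    define K where "K = 1 / m + 1"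
    have "m * K = 1 + m" "0 < K" using x0 by (auto simp: K_def m_def field_simps)
    have "m * K = (LINT g:{x0..x0+K}|lborel. m)"
      using \<open>0 < K\<close> by (simp add: set_integral_const)
    also have "\<dots> \<le> (LINT g:{x0..x0+K}|lborel. p g)"
    proof (rule set_integral_mono)
      show "set_integrable lborel {x0..x0+K} (\<lambda>_. m)"
        unfolding set_integrable_def using \<open>0 < K\<close>
        by (intro integrable_scaleR_left integrable_real_indicator) auto
      show "set_integrable lborel {x0..x0+K} p"
        using x0(1) by (intro set_integrable_subset[OF integrable]) auto
    qed (use above in simp)
    also have "\<dots> \<le> (LINT g:{0..}|lborel. p g)"
      using x0(1) nonneg by (intro set_integral_mono_set[OF integrable]) auto
    finally show False using \<open>m * K = 1 + m\<close> x0 total m_def by simp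
  qed
  then obtain N where N: "x0 \<le> N" "\<And>g. N \<le> g \<Longrightarrow> p g \<le> m" by blast
  have "\<exists>x\<in>{0..N}. \<forall>y\<in>{0..N}. p y \<le> p x"
    using x0(1) N(1) by (intro continuous_attains_sup continuous_on_subset[OF continuous]) auto
  then obtain x where x: "x \<in> {0..N}" "\<And>y. y \<in> {0..N} \<Longrightarrow> p y \<le> p x" by blast
  have "p y \<le> p x" if "0 \<le> y" for y
  proof (cases "y \<le> N")
    case True
    then show ?thesis using x(2) that by simp
  next
    case False
    then have "p y \<le> p x0" using N(2) m_def by simp
    also have "\<dots> \<le> p x" using x(2) x0(1) N(1) by simp
    finally show ?thesis .
  qed
  then show ?thesis using x(1) by auto
qed

lemma gamma_l_super_level:
  assumes "a \<le> Sup (p ` {0..})"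
  shows "0 \<le> gamma_l p a" "a \<le> p (gamma_l p a)" "\<And>g. 0 \<le> g \<Longrightarrow> g < gamma_l p a \<Longrightarrow> p g < a"
proof -
  define S where "S = {g. 0 \<le> g \<and> a \<le> p g}"
  obtain x where x: "0 \<le> x" "\<And>y. 0 \<le> y \<Longrightarrow> p y \<le> p x" using exists_maximum by blast
  then have "Sup (p ` {0..}) = p x" by (intro cSup_eq_maximum) auto
  then have ne: "S \<noteq> {}" using x assms by (auto simp: S_def)
  have bdd: "bdd_below S" unfolding S_def by (rule bdd_belowI[of _ 0]) auto
  have "closed S"
    using continuous_on_closed_Collect_le[OF continuous_on_const continuous closed_atLeast, of a]
    by (simp add: S_def conj_commute)
  then have "Inf S \<in> S" by (rule closed_contains_Inf[OF ne bdd])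
  moreover have "gamma_l p a = Inf S" by (simp add: gamma_l_def S_def)
  ultimately show "0 \<le> gamma_l p a" "a \<le> p (gamma_l p a)" by (auto simp: S_def)
  show "p g < a" if "0 \<le> g" "g < gamma_l p a" for g
    using cInf_lower[OF _ bdd, of g] that \<open>gamma_l p a = Inf S\<close> unfolding S_def
    by (metis (mono_tags, lifting) mem_Collect_eq not_le not_less_iff_gr_or_eq)
qed

definition excess :: "real \<Rightarrow> real \<Rightarrow> real \<Rightarrow> real" where
  "excess K \<beta> x = (LINT g:{x<..}|lborel. (p g - \<beta>) / (g + K)\<^sup>2)"

lemma excess_integrable:
  assumes "0 \<le> x" "1 \<le> K"
  shows "set_integrable lborel {x<..} (\<lambda>g. (p g - \<beta>) / (g + K)\<^sup>2)"
proof -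
  have "set_integrable lborel {x<..} (\<lambda>g. p g * (1 / (g + K)\<^sup>2))"
    by (rule set_integrable_mult_bounded[where B=1])
      (use assms inverse_square_bounds[of _ K] in \<open>auto simp del: divide_le_eq_1\<close>)
  moreover have "set_integrable lborel {x<..} (\<lambda>g. \<beta> * (1 / (g + K)\<^sup>2))"
    using assms by (intro set_integrable_mult_right set_integral_inverse_square_greaterThan(1)) auto
  ultimately have "set_integrable lborel {x<..} (\<lambda>g. p g * (1 / (g + K)\<^sup>2) - \<beta> * (1 / (g + K)\<^sup>2))"
    by (rule set_integral_diff(1))
  then show ?thesis by (simp add: diff_divide_distrib)
qed

lemma excess_eq_tail_expectation:
  assumes "0 \<le> x" "1 \<le> K"
  shows "excess K \<beta> x = tail_expectation (\<lambda>g. 1 / (g + K)\<^sup>2) x - \<beta> / (x + K)"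
proof -
  have i: "set_integrable lborel {x<..} (\<lambda>g. (p g - 0) / (g + K)\<^sup>2)"
    "set_integrable lborel {x<..} (\<lambda>g. \<beta> * (1 / (g + K)\<^sup>2))"
    using assms by (simp_all only: excess_integrable set_integrable_mult_right
        set_integral_inverse_square_greaterThan(1) add_pos_nonneg)
  have "excess K \<beta> x = (LINT g:{x<..}|lborel. (p g - 0) / (g + K)\<^sup>2 - \<beta> * (1 / (g + K)\<^sup>2))"
    unfolding excess_def by (rule set_lebesgue_integral_cong) (auto simp: diff_divide_distrib)
  also have "\<dots> = (LINT g:{x<..}|lborel. (p g - 0) / (g + K)\<^sup>2) - \<beta> * (1 / (x + K))"
    using assms
    by (simp only: set_integral_diff(2)[OF i] set_integral_mult_right
        set_integral_inverse_square_greaterThan(2) add_pos_nonneg)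
  finally show ?thesis by (simp add: tail_expectation_def)
qed

lemma excess_split:
  assumes "0 \<le> x" "1 \<le> K" "x \<le> y"
  shows "excess K \<beta> x = (LINT g:{x<..y}|lborel. (p g - \<beta>) / (g + K)\<^sup>2) + excess K \<beta> y"
  unfolding excess_def using assms by (intro set_integral_greaterThan_split excess_integrable)

lemma excess_antimono_level:
  assumes "0 \<le> x" "1 \<le> K" "\<beta> \<le> \<beta>'"
  shows "excess K \<beta>' x \<le> excess K \<beta> x"
  unfolding excess_def using assms
  by (intro set_integral_mono excess_integrable divide_right_mono) auto

text \<open>Changing the weight 1/(g + K0)^2 to the flatter 1/(g + K)^2 multiplies the integrand
  by a factor increasing in g, while p g - \<alpha> changes sign at most once, from + to -, on
  (t,\<infinity>) by quasiconcavity; so the factor can be frozen at the sign change.\<close>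
lemma excess_rescale:
  assumes t: "0 \<le> t" "\<alpha> \<le> p t" and x: "t \<le> x" and K: "1 \<le> K0" "K0 \<le> K"
  obtains C where "0 < C" "excess K \<alpha> x \<le> C * excess K0 \<alpha> x"
proof -
  define w where "w g = ((g + K0) / (g + K))\<^sup>2" for g
  define q where "q g = (p g - \<alpha>) / (g + K0)\<^sup>2" for g
  have split: "(p g - \<alpha>) / (g + K)\<^sup>2 = w g * q g" if "0 \<le> g" for g
    using that K by (simp add: w_def q_def power_divide field_simps)
  have mono: "mono_on {0..} w" unfolding w_def using K by (intro shifted_ratio_mono) auto
  obtain C where C: "0 < C" "\<And>g. x < g \<Longrightarrow> w g * q g \<le> C * q g"
  proof (cases rule: quasiconcave_nonneg_single_crossing[OF quasiconcave t])
    case (1 r)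
    show ?thesis
    proof (rule that[of "w r"])
      show "0 < w r" using 1 t K by (simp add: w_def)
      show "w g * q g \<le> w r * q g" if "x < g" for g
        using 1 t x that
        by (intro mono_on_sign_change_mult_le[OF mono]) (auto simp: q_def divide_nonpos_nonneg)
    qed
  next
    case 2
    show ?thesis
    proof (rule that[of 1])
      show "w g * q g \<le> 1 * q g" if "x < g" for g
      proof (rule mult_right_mono)
        have "(g + K0) / (g + K) \<le> 1" "0 \<le> (g + K0) / (g + K)"
          using that t x K by auto
        then show "w g \<le> 1" unfolding w_def by (simp add: power_le_one)
        show "0 \<le> q g" using 2 that x by (simp add: q_def)
      qed
    qed simp
  qed
  have "excess K \<alpha> x \<le> (LINT g:{x<..}|lborel. C * q g)"
    unfolding excess_def q_def
    using C(2) split t x K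
    by (intro set_integral_mono excess_integrable set_integrable_mult_right)
      (auto simp: q_def)
  also have "\<dots> = C * excess K0 \<alpha> x"
    unfolding excess_def q_def by (rule set_integral_mult_right)
  finally show ?thesis using that[OF C(1)] by simp
qed

end

locale side_info_gain = quasiconcave_density +
  fixes c :: real
  assumes c_pos: "0 < c"
begin

text \<open>With c = 2^(2 R_c) - 1 and T the side-information threshold of a rate R_s, one has
  level T = 2^(2 (R_s + R_c)), so gain T g = D_d(0, g) - D_d(R_s + R_c, g) and
  expected_gain T is the expected distortion saved when the channel is not in outage.\<close>
definition level :: "real \<Rightarrow> real" where
  "level T = 1 + c * (1 + T)"

definition gain :: "real \<Rightarrow> real \<Rightarrow> real" where
  "gain T g = 1 / (g + 1) - 1 / (g + level T)"

definition expected_gain :: "real \<Rightarrow> real" where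
  "expected_gain T = tail_expectation (gain T) T"

lemma level_ge_1: "0 \<le> T \<Longrightarrow> 1 \<le> level T"
  using c_pos by (simp add: level_def)

lemma level_mono: "T \<le> T' \<Longrightarrow> level T \<le> level T'"
  using c_pos by (simp add: level_def)

lemma gain_measurable[measurable]: "gain T \<in> borel_measurable lborel"
  unfolding gain_def by measurable

lemma gain_continuous: "0 \<le> T \<Longrightarrow> continuous_on {0..} (gain T)"
  unfolding gain_def using level_ge_1[of T] by (intro continuous_intros) auto

lemma gain_bounds:
  assumes "0 \<le> T" "0 \<le> g"
  shows "0 \<le> gain T g" "gain T g \<le> 1"
proof -
  have "1 / (g + level T) \<le> 1 / (g + 1)" "0 \<le> 1 / (g + level T)" "1 / (g + 1) \<le> 1"
    using level_ge_1[OF assms(1)] assms(2) by (auto intro!: divide_left_mono)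
  then show "0 \<le> gain T g" "gain T g \<le> 1" unfolding gain_def by linarith+
qed

lemma gain_diagonal:
  assumes "0 \<le> u"
  shows "gain u u = c / (u + level u)"
proof -
  have "u + level u = (1 + u) * (1 + c)" by (simp add: level_def algebra_simps)
  moreover have "1 / (u + 1) - 1 / ((1 + u) * (1 + c)) = c / ((1 + u) * (1 + c))"
    using c_pos assms by (simp add: divide_simps add.commute)
  ultimately show ?thesis unfolding gain_def by simp
qed

lemma gain_expansion:
  assumes "0 \<le> u" "0 \<le> y" "0 \<le> g"
  shows "gain y g = gain u g + c * (y - u) * (1 / (g + level u)\<^sup>2)
           - c\<^sup>2 * (y - u)\<^sup>2 * (1 / ((g + level u)\<^sup>2 * (g + level y)))"
proof -
  have a: "g + level u \<noteq> 0" "g + level y \<noteq> 0" using level_ge_1 assms by (smt (verit))+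
  have "- 1 / (g + level y) = - 1 / (g + level u) + (c * (y - u)) * (1 / (g + level u)\<^sup>2)
      - (c * (y - u))\<^sup>2 * (1 / ((g + level u)\<^sup>2 * (g + level y)))"
    using second_order_inverse_expansion[OF a]
    by (simp add: level_def algebra_simps)
  then show ?thesis unfolding gain_def by (simp add: power_mult_distrib)
qed

lemma remainder_weight_bounds:
  assumes "0 \<le> u" "0 \<le> y" "0 \<le> g"
  shows "0 \<le> 1 / ((g + level u)\<^sup>2 * (g + level y))" "1 / ((g + level u)\<^sup>2 * (g + level y)) \<le> 1"
proof -
  have "1 \<le> (g + level u)\<^sup>2" "1 \<le> g + level y"
    using level_ge_1[OF assms(1)] level_ge_1[OF assms(2)] assms(3) by (simp_all add: one_le_power)
  from mult_mono[OF this] have "1 \<le> (g + level u)\<^sup>2 * (g + level y)" by simp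
  then show "0 \<le> 1 / ((g + level u)\<^sup>2 * (g + level y))" "1 / ((g + level u)\<^sup>2 * (g + level y)) \<le> 1"
    by (simp_all add: divide_le_eq)
qed

lemma expected_gain_expansion:
  assumes "0 \<le> u" "0 \<le> y"
  defines "h2 \<equiv> \<lambda>g. 1 / (g + level u)\<^sup>2"
    and "h3 \<equiv> \<lambda>g. 1 / ((g + level u)\<^sup>2 * (g + level y))"
  shows "expected_gain y = tail_expectation (gain u) y + c * (y - u) * tail_expectation h2 y
           - c\<^sup>2 * (y - u)\<^sup>2 * tail_expectation h3 y"
proof -
  have h2: "0 \<le> h2 g \<and> h2 g \<le> 1" if "0 \<le> g" for g
    unfolding h2_def using inverse_square_bounds[OF that level_ge_1[OF assms(1)]] by simp
  have h3: "0 \<le> h3 g \<and> h3 g \<le> 1" if "0 \<le> g" for g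
    unfolding h3_def using remainder_weight_bounds[OF assms(1,2) that] by simp
  have "h2 \<in> borel_measurable lborel" unfolding h2_def by measurable
  have "h3 \<in> borel_measurable lborel" unfolding h3_def by measurable
  have int: "set_integrable lborel {y<..} (\<lambda>g. p g * h g)"
    if "h \<in> borel_measurable lborel" "\<And>g. 0 \<le> g \<Longrightarrow> 0 \<le> h g \<and> h g \<le> 1" for h
    by (rule set_integrable_mult_bounded[OF _ _ that(1), of _ 1]) (use assms(2) that(2) in force)+
  have "p g * gain y g = p g * gain u g + c * (y - u) * (p g * h2 g) - c\<^sup>2 * (y - u)\<^sup>2 * (p g * h3 g)"
    if "0 \<le> g" for g
    using gain_expansion[OF assms(1,2) that]
    unfolding h2_def h3_def by (simp only: distrib_left right_diff_distrib mult_ac)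
  then have "expected_gain y = (LINT g:{y<..}|lborel.
      p g * gain u g + c * (y - u) * (p g * h2 g) - c\<^sup>2 * (y - u)\<^sup>2 * (p g * h3 g))"
    unfolding expected_gain_def tail_expectation_def
    by (intro set_lebesgue_integral_cong) (use assms(2) in auto)
  also have "\<dots> = tail_expectation (gain u) y + c * (y - u) * tail_expectation h2 y
           - c\<^sup>2 * (y - u)\<^sup>2 * tail_expectation h3 y"
  proof -
    have i: "set_integrable lborel {y<..} (\<lambda>g. p g * gain u g)"
      "set_integrable lborel {y<..} (\<lambda>g. c * (y - u) * (p g * h2 g))"
      "set_integrable lborel {y<..} (\<lambda>g. c\<^sup>2 * (y - u)\<^sup>2 * (p g * h3 g))"
      using int[OF gain_measurable] int[OF \<open>h2 \<in> _\<close> h2] int[OF \<open>h3 \<in> _\<close> h3]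
        gain_bounds[OF assms(1)] by (auto intro!: set_integrable_mult_right)
    show ?thesis
      unfolding tail_expectation_def
      by (simp only: set_integral_diff(2)[OF set_integral_add(1)[OF i(1,2)] i(3)]
          set_integral_add(2)[OF i(1,2)] set_integral_mult_right)
  qed
  finally show ?thesis .
qed

lemma expansion_remainder_has_derivative:
  assumes "0 \<le> u"
  shows "((\<lambda>y. c\<^sup>2 * (y - u)\<^sup>2 * tail_expectation (\<lambda>g. 1 / ((g + level u)\<^sup>2 * (g + level y))) y)
    has_real_derivative 0) (at u within {0..b})"
proof (rule has_real_derivative_zero_if_quadratic_bound)
  fix y assume "y \<in> {0..b}"
  let ?h = "\<lambda>g. 1 / ((g + level u)\<^sup>2 * (g + level y))"
  have "?h \<in> borel_measurable lborel" by measurable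
  then have "0 \<le> tail_expectation ?h y" "tail_expectation ?h y \<le> 1"
    using tail_expectation_bounds[of y ?h] remainder_weight_bounds[OF assms] \<open>y \<in> {0..b}\<close> by simp_all
  then show "\<bar>c\<^sup>2 * (y - u)\<^sup>2 * tail_expectation ?h y\<bar> \<le> c\<^sup>2 * (y - u)\<^sup>2"
    by (simp add: abs_mult mult_left_le)
qed simp

text \<open>Expanding gain y to second order about u, the first two terms are tail expectations,
  differentiable by the fundamental theorem of calculus, and the remainder is O((y - u)^2).\<close>
lemma expected_gain_has_derivative:
  assumes u: "0 \<le> u" "u \<le> b"
  shows "(expected_gain has_real_derivative c * excess (level u) (p u) u) (at u within {0..b})"
proof -
  define h2 where "h2 = (\<lambda>g. 1 / (g + level u)\<^sup>2)"
  define h3 where "h3 = (\<lambda>y g. 1 / ((g + level u)\<^sup>2 * (g + level y)))"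
  define R where "R = (\<lambda>y. c\<^sup>2 * (y - u)\<^sup>2 * tail_expectation (h3 y) y)"
  have h2: "0 \<le> h2 g \<and> h2 g \<le> 1" if "0 \<le> g" for g
    unfolding h2_def using inverse_square_bounds[OF that level_ge_1[OF u(1)]] by simp
  have "continuous_on {0..} h2"
    unfolding h2_def using level_ge_1[OF u(1)] by (intro continuous_intros) (auto simp: add_pos_nonneg)
  then have dQ2: "(tail_expectation h2 has_real_derivative - (p u * h2 u)) (at u within {0..b})"
    using h2 u by (intro tail_expectation_has_derivative[where B=1]) (auto simp: h2_def)
  have dQ1: "(tail_expectation (gain u) has_real_derivative - (p u * gain u u)) (at u within {0..b})"
    using gain_bounds[OF u(1)] u
    by (intro tail_expectation_has_derivative[where B=1] gain_measurable gain_continuous) auto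
  have dR: "(R has_real_derivative 0) (at u within {0..b})"
    unfolding R_def h3_def by (rule expansion_remainder_has_derivative[OF u(1)])
  have "((\<lambda>y. c * (y - u)) has_real_derivative c) (at u within {0..b})"
    by (auto intro!: derivative_eq_intros)
  from DERIV_diff[OF DERIV_add[OF dQ1 DERIV_mult[OF this dQ2]] dR]
  have "((\<lambda>y. tail_expectation (gain u) y + c * (y - u) * tail_expectation h2 y - R y)
      has_real_derivative - (p u * gain u u) + c * tail_expectation h2 u - 0) (at u within {0..b})"
    by simp
  moreover have "- (p u * gain u u) + c * tail_expectation h2 u - 0 = c * excess (level u) (p u) u"
    using u(1) level_ge_1[OF u(1)]
    by (simp add: gain_diagonal excess_eq_tail_expectation h2_def algebra_simps)
  moreover have "expected_gain y = tail_expectation (gain u) y + c * (y - u) * tail_expectation h2 y - R y"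
    if "y \<in> {0..b}" for y
    using expected_gain_expansion[OF u(1), of y] that unfolding R_def h2_def h3_def by simp
  ultimately show ?thesis
    using has_field_derivative_transform_within[of _ _ u "{0..b}" 1 expected_gain] u by simp
qed

lemma expected_gain_continuous: "continuous_on {0..b} expected_gain"
  unfolding continuous_on_eq_continuous_within
  by (metis atLeastAtMost_iff expected_gain_has_derivative DERIV_continuous)

lemma expected_gain_DERIV: "0 < x \<Longrightarrow> DERIV expected_gain x :> c * excess (level x) (p x) x"
  using expected_gain_has_derivative[of x "x + 1"] at_within_interior[of x "{0..x+1}"] by simp

context
  fixes t \<alpha> :: real
  assumes t: "0 \<le> t" "\<alpha> \<le> p t"
    and below: "\<And>g. 0 \<le> g \<Longrightarrow> g < t \<Longrightarrow> p g < \<alpha>"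
    and target: "excess (level t) \<alpha> t = 0"
begin

lemma excess_diagonal_nonpos_above:
  assumes x: "t < x"
  shows "excess (level x) (p x) x \<le> 0"
proof (cases "p x < \<alpha>")
  case True
  have "p g \<le> p x" if "x < g" for g
    using quasiconcave_nonneg_between[OF quasiconcave t(1), of x g] x that t(2) True by auto
  then show ?thesis
    unfolding excess_def by (intro set_integral_nonpos divide_nonpos_nonneg) auto
next
  case False
  have x0: "0 \<le> x" and K: "1 \<le> level t" "level t \<le> level x"
    using x t(1) level_ge_1 level_mono by auto
  obtain C where C: "0 < C" "excess (level x) \<alpha> x \<le> C * excess (level t) \<alpha> x"
    by (rule excess_rescale[OF t less_imp_le[OF x] K])
  have "0 \<le> (LINT g:{t<..x}|lborel. (p g - \<alpha>) / (g + level t)\<^sup>2)"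
  proof (rule set_integral_nonneg)
    fix g assume "g \<in> {t<..x}"
    then have "min (p t) (p x) \<le> p g" by (intro quasiconcave_nonneg_between[OF quasiconcave t(1)]) auto
    then show "0 \<le> (p g - \<alpha>) / (g + level t)\<^sup>2" using t(2) False by auto
  qed
  then have "excess (level t) \<alpha> x \<le> 0"
    using excess_split[OF t(1) K(1), of x \<alpha>] x target by simp
  then have "excess (level x) \<alpha> x \<le> 0"
    using C by (simp add: mult_nonneg_nonpos order.trans)
  moreover have "excess (level x) (p x) x \<le> excess (level x) \<alpha> x"
    using False x0 level_ge_1 by (intro excess_antimono_level) auto
  ultimately show ?thesis by simp
qed

lemma excess_diagonal_nonneg_below:
  assumes x: "0 \<le> x" "x < t"
  shows "0 \<le> excess (level x) (p x) x"
proof -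
  have px: "p x < \<alpha>" using below x by simp
  have K: "1 \<le> level x" "level x \<le> level t" using x level_ge_1 level_mono by auto
  obtain C where C: "0 < C" "excess (level t) \<alpha> t \<le> C * excess (level x) \<alpha> t"
    by (rule excess_rescale[OF t order.refl K])
  then have "0 \<le> excess (level x) \<alpha> t"
    using target by (simp add: zero_le_mult_iff)
  also have "\<dots> \<le> excess (level x) (p x) t"
    using px t(1) K(1) by (intro excess_antimono_level) auto
  also have "\<dots> \<le> excess (level x) (p x) x"
  proof -
    have "0 \<le> (LINT g:{x<..t}|lborel. (p g - p x) / (g + level x)\<^sup>2)"
    proof (rule set_integral_nonneg)
      fix g assume "g \<in> {x<..t}"
      then have "min (p x) (p t) \<le> p g" by (intro quasiconcave_nonneg_between[OF quasiconcave x(1)]) auto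
      then show "0 \<le> (p g - p x) / (g + level x)\<^sup>2" using t(2) px by auto
    qed
    then show ?thesis using excess_split[OF x(1) K(1), of t "p x"] x by simp
  qed
  finally show ?thesis .
qed

lemma expected_gain_le_target:
  assumes T: "0 \<le> T"
  shows "expected_gain T \<le> expected_gain t"
proof (cases "T \<le> t")
  case True
  show ?thesis
  proof (rule DERIV_nonneg_imp_increasing_open[OF True])
    show "\<exists>y. DERIV expected_gain x :> y \<and> 0 \<le> y" if "T < x" "x < t" for x
      using that T c_pos excess_diagonal_nonneg_below[of x] expected_gain_DERIV[of x] by auto
    show "continuous_on {T..t} expected_gain"
      using T by (intro continuous_on_subset[OF expected_gain_continuous]) auto
  qed
next
  case False
  show ?thesis
  proof (rule DERIV_nonpos_imp_decreasing_open[of t T])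
    show "t \<le> T" using False by simp
    show "\<exists>y. DERIV expected_gain x :> y \<and> y \<le> 0" if "t < x" "x < T" for x
      using that t(1) c_pos excess_diagonal_nonpos_above[of x] expected_gain_DERIV[of x]
      by (metis less_eq_real_def mult_nonneg_nonpos order.strict_trans1)
    show "continuous_on {t..T} expected_gain"
      using t(1) by (intro continuous_on_subset[OF expected_gain_continuous]) auto
  qed
qed

end

end

definition side_info_threshold :: "real \<Rightarrow> real \<Rightarrow> real" where
  "side_info_threshold Rs Rc = (2 powr (2 * (Rs + Rc)) - 1) / (2 powr (2 * Rc) - 1) - 1"

lemma side_info_threshold_nonneg:
  assumes "0 < Rc" "0 \<le> Rs"
  shows "0 \<le> side_info_threshold Rs Rc"
proof -
  have "2 powr (2 * Rc) \<le> 2 powr (2 * (Rs + Rc))" using assms by (intro powr_mono) auto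
  then show ?thesis using assms by (simp add: side_info_threshold_def le_divide_eq)
qed

lemma side_info_threshold_level:
  assumes "0 < Rc"
  shows "1 + (2 powr (2 * Rc) - 1) * (1 + side_info_threshold Rs Rc) = 2 powr (2 * (Rs + Rc))"
  using assms by (simp add: side_info_threshold_def)

lemma side_info_threshold_rate:
  assumes "0 < Rc" "0 \<le> t"
  defines "Rs \<equiv> 1/2 * log 2 (1 + (1 + t) * (2 powr (2 * Rc) - 1)) - Rc"
  shows "0 \<le> Rs" "side_info_threshold Rs Rc = t"
proof -
  let ?X = "1 + (1 + t) * (2 powr (2 * Rc) - 1)"
  have "1 < 2 powr (2 * Rc)" using assms by simp
  moreover have "0 \<le> t * (2 powr (2 * Rc) - 1)" using assms(2) \<open>1 < 2 powr (2 * Rc)\<close> by simp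
  ultimately have "2 powr (2 * Rc) \<le> ?X" "0 < ?X" by (simp_all add: algebra_simps)
  then show "0 \<le> Rs" unfolding Rs_def using le_log_iff[of 2 ?X "2 * Rc"] by simp
  have "2 powr (2 * (Rs + Rc)) = ?X" unfolding Rs_def using \<open>0 < ?X\<close> by simp
  then show "side_info_threshold Rs Rc = t"
    using \<open>1 < 2 powr (2 * Rc)\<close> assms(1) by (simp add: side_info_threshold_def)
qed

lemma outage_s_iff:
  assumes h: "0 \<le> h" and g: "0 \<le> g" and Rc: "0 < Rc" and Rs: "0 \<le> Rs"
  shows "(h, g) \<in> outage_s Rs Rc \<longleftrightarrow> h \<le> 2 powr (2 * Rc) - 1 \<or> g \<le> side_info_threshold Rs Rc"
proof -
  define c E where "c = 2 powr (2 * Rc) - 1" and "E = 2 powr (2 * (Rs + Rc))"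
  have c0: "0 < c" using Rc by (simp add: c_def)
  have "1 \<le> E" unfolding E_def using Rc Rs by (intro ge_one_powr_ge_zero) auto
  then have "0 \<le> (E - 1) / (1 + g)" using g by simp
  have "Rc \<ge> 1/2 * log 2 (1 + h) \<longleftrightarrow> log 2 (1 + h) \<le> 2 * Rc" by linarith
  also have "\<dots> \<longleftrightarrow> 1 + h \<le> 2 powr (2 * Rc)" by (rule log_le_iff) (use h in auto)
  finally have i1: "Rc \<ge> 1/2 * log 2 (1 + h) \<longleftrightarrow> h \<le> c" unfolding c_def by linarith
  have "Rc \<le> 1/2 * log 2 (1 + (E - 1) / (1 + g)) \<longleftrightarrow> 2 * Rc \<le> log 2 (1 + (E - 1) / (1 + g))"
    by linarith
  also have "\<dots> \<longleftrightarrow> 2 powr (2 * Rc) \<le> 1 + (E - 1) / (1 + g)"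
    by (rule le_log_iff) (use \<open>0 \<le> (E - 1) / (1 + g)\<close> in auto)
  also have "\<dots> \<longleftrightarrow> c \<le> (E - 1) / (1 + g)" unfolding c_def by linarith
  also have "\<dots> \<longleftrightarrow> c * (1 + g) \<le> E - 1" using g by (simp add: le_divide_eq)
  also have "\<dots> \<longleftrightarrow> g \<le> side_info_threshold Rs Rc"
    unfolding side_info_threshold_def c_def[symmetric] E_def[symmetric]
    using c0 by (simp add: le_diff_eq le_divide_eq algebra_simps)
  finally show ?thesis using i1 unfolding outage_s_def E_def c_def by auto
qed

lemma Dd_measurable[measurable]: "Dd R \<in> borel_measurable borel"
  unfolding Dd_def by measurable

lemma Dd_bounds:
  assumes "0 \<le> g" "0 \<le> R"
  shows "0 \<le> Dd R g" "Dd R g \<le> 1"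
proof -
  have "1 \<le> g + 2 powr (2 * R)" using assms ge_one_powr_ge_zero[of 2 "2 * R"] by simp
  then show "0 \<le> Dd R g" "Dd R g \<le> 1" by (simp_all add: Dd_def)
qed

lemma Dd_antimono:
  assumes "0 \<le> g" "R \<le> R'"
  shows "Dd R' g \<le> Dd R g"
  unfolding Dd_def using assms
  by (intro divide_left_mono add_left_mono mult_pos_pos add_nonneg_pos) auto

text \<open>The integrand differs from D_d(0, G) only off the outage set, which is the product
  event {H > c} x {G > T}; so the correction factors by independence.\<close>
lemma ED_s_eq:
  fixes M :: "'w measure" and H G :: "'w \<Rightarrow> real"
  assumes M: "prob_space M"
    and H: "\<And>\<omega>. \<omega> \<in> space M \<Longrightarrow> 0 \<le> H \<omega>" "H \<in> borel_measurable M"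
    and G: "\<And>\<omega>. \<omega> \<in> space M \<Longrightarrow> 0 \<le> G \<omega>" "distributed M lborel G (\<lambda>x. ennreal (pG x))"
    and pG: "\<And>x. 0 \<le> pG x"
    and indep: "prob_space.indep_var M borel H borel G"
    and R: "0 < Rc" "0 \<le> Rs"
  shows "ED_s M H G Rs Rc = (\<integral>\<omega>. Dd 0 (G \<omega>) \<partial>M)
    - (\<integral>\<omega>. indicator {2 powr (2 * Rc) - 1<..} (H \<omega>) \<partial>M)
      * (LINT g:{side_info_threshold Rs Rc<..}|lborel. pG g * (Dd 0 g - Dd (Rs + Rc) g))"
proof -
  interpret prob_space M by (rule M)
  define T where "T = side_info_threshold Rs Rc"
  define \<phi> where "\<phi> \<omega> = (indicator {2 powr (2 * Rc) - 1<..} (H \<omega>) :: real)" for \<omega>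
  define k where "k g = indicator {T<..} g * (Dd 0 g - Dd (Rs + Rc) g)" for g :: real
  have [measurable]: "G \<in> borel_measurable M" using distributed_measurable[OF G(2)] by simp
  have [measurable]: "H \<in> borel_measurable M" "k \<in> borel_measurable borel"
    using H(2) unfolding k_def by measurable
  have k: "0 \<le> k g" "k g \<le> 1" if "0 \<le> g" for g
    using Dd_bounds[OF that, of 0] Dd_bounds[OF that, of "Rs + Rc"] Dd_antimono[OF that, of 0 "Rs + Rc"] R
    by (auto simp: k_def indicator_def)
  have bounded: "integrable M f" if "f \<in> borel_measurable M" "\<And>\<omega>. \<omega> \<in> space M \<Longrightarrow> \<bar>f \<omega>\<bar> \<le> 1"
    for f :: "'w \<Rightarrow> real"
    using that by (intro integrable_const_bound[where B=1] AE_I2) auto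
  have int: "integrable M \<phi>" "integrable M (\<lambda>\<omega>. k (G \<omega>))" "integrable M (\<lambda>\<omega>. Dd 0 (G \<omega>))"
    using k G(1) Dd_bounds[of _ 0] unfolding \<phi>_def
    by (auto intro!: bounded simp: indicator_def)
  have out: "indicator (outage_s Rs Rc) (H \<omega>, G \<omega>) = 1 - \<phi> \<omega> * indicator {T<..} (G \<omega>)"
    if "\<omega> \<in> space M" for \<omega>
    using outage_s_iff[OF H(1) G(1) R, OF that that] by (auto simp: \<phi>_def T_def indicator_def not_le)
  have "ED_s M H G Rs Rc = (\<integral>\<omega>. \<phi> \<omega> * (indicator {T<..} (G \<omega>) * Dd (Rs + Rc) (G \<omega>)) \<partial>M)
      + (\<integral>\<omega>. Dd 0 (G \<omega>) - \<phi> \<omega> * (indicator {T<..} (G \<omega>) * Dd 0 (G \<omega>)) \<partial>M)"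
    unfolding ED_s_def indicator_compl
    by (intro arg_cong2[where f="(+)"] Bochner_Integration.integral_cong) (auto simp: out algebra_simps)
  also have "\<dots> = (\<integral>\<omega>. Dd 0 (G \<omega>) - \<phi> \<omega> * k (G \<omega>) \<partial>M)"
    using int k G(1) Dd_bounds R
    by (subst Bochner_Integration.integral_add[symmetric])
      (auto intro!: bounded integral_cong simp: \<phi>_def k_def indicator_def algebra_simps)
  also have "\<dots> = (\<integral>\<omega>. Dd 0 (G \<omega>) \<partial>M) - (\<integral>\<omega>. \<phi> \<omega> \<partial>M) * (\<integral>\<omega>. k (G \<omega>) \<partial>M)"
  proof -
    have "indep_var borel \<phi> borel (\<lambda>\<omega>. k (G \<omega>))"
      using indep_var_compose[OF indep, of "indicator {2 powr (2 * Rc) - 1<..}" borel k borel]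
      unfolding \<phi>_def comp_def by simp
    from indep_var_lebesgue_integral[OF this int(1,2)] indep_var_integrable[OF this int(1,2)]
    show ?thesis using int(3) by simp
  qed
  also have "(\<integral>\<omega>. k (G \<omega>) \<partial>M) = (\<integral>g. pG g * k g \<partial>lborel)"
    using pG by (intro distributed_integral[OF G(2), symmetric]) (auto simp: k_def)
  also have "\<dots> = (LINT g:{T<..}|lborel. pG g * (Dd 0 g - Dd (Rs + Rc) g))"
    unfolding set_lebesgue_integral_def
    by (intro Bochner_Integration.integral_cong) (auto simp: k_def indicator_def)
  finally show ?thesis unfolding T_def \<phi>_def .
qed

lemma distributed_nonneg_density:
  fixes G :: "'w \<Rightarrow> real" and pG :: "real \<Rightarrow> real"
  assumes "prob_space M" "\<forall>\<omega>\<in>space M. 0 \<le> G \<omega>"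
    and dist: "distributed M lborel G (\<lambda>x. ennreal (pG x))" and pG: "\<And>x. 0 \<le> pG x"
  shows "pG \<in> borel_measurable lborel" "set_integrable lborel {0..} pG"
    and "(LINT g:{0..}|lborel. pG g) = 1"
proof -
  interpret prob_space M by fact
  show "pG \<in> borel_measurable lborel" by (rule distributed_real_measurable[OF pG dist])
  have "integrable lborel (\<lambda>x. pG x * 1)"
    using distributed_integrable[OF dist, of "\<lambda>_. 1"] pG by simp
  then have "integrable lborel (\<lambda>x. pG x * indicator {0..} x)"
    by (intro integrable_real_mult_indicator) simp_all
  then show "set_integrable lborel {0..} pG" by (simp add: set_integrable_def mult.commute)
  have "(\<integral>x. pG x * indicator {0..} x \<partial>lborel) = (\<integral>\<omega>. indicator {0..} (G \<omega>) \<partial>M)"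
    using pG by (intro distributed_integral[OF dist]) auto
  also have "\<dots> = (\<integral>\<omega>. 1 \<partial>M)"
    using assms(2) by (intro Bochner_Integration.integral_cong) auto
  also have "\<dots> = 1" by (simp add: prob_space)
  finally show "(LINT g:{0..}|lborel. pG g) = 1"
    unfolding set_lebesgue_integral_def by (simp add: mult.commute)
qed

context side_info_gain
begin

lemma expected_gain_side_info_threshold:
  assumes "c = 2 powr (2 * Rc) - 1" "0 < Rc"
  shows "expected_gain (side_info_threshold Rs Rc)
    = (LINT g:{side_info_threshold Rs Rc<..}|lborel. p g * (Dd 0 g - Dd (Rs + Rc) g))"
proof -
  have "level (side_info_threshold Rs Rc) = 2 powr (2 * (Rs + Rc))"
    using side_info_threshold_level[OF assms(2), of Rs] unfolding level_def assms(1)[symmetric] .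
  then show ?thesis by (simp add: expected_gain_def tail_expectation_def gain_def Dd_def)
qed

lemma excess_target_alpha:
  assumes "c = 2 powr (2 * R) - 1" "target_alpha p R a"
  shows "excess (level (gamma_l p a)) a (gamma_l p a) = 0"
proof -
  define t where "t = gamma_l p a"
  let ?f = "\<lambda>g. (p g - a) / (g + level t)\<^sup>2"
  have "2 powr (2 * R) = 1 + c" using assms(1) by simp
  then have eq: "(1 + t) * 2 powr (2 * R) + g - t = g + level t" for g
    by (simp add: level_def algebra_simps)
  have "(LINT g:{t..}|lborel. (p g - a) / ((1 + t) * 2 powr (2 * R) + g - t)\<^sup>2) = 0"
    using assms(2) by (simp add: target_alpha_def t_def)
  then have "(LINT g:{t..}|lborel. ?f g) = 0" by (simp only: eq)
  moreover have "(LINT g:{t<..}|lborel. ?f g) = (LINT g:{t..}|lborel. ?f g)"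
    using AE_lborel_singleton[of t]
    by (intro set_integral_cong_set) (auto simp: set_borel_measurable_def elim: eventually_mono)
  ultimately show ?thesis by (simp add: excess_def t_def)
qed

lemma ED_s_eq_expected_gain:
  fixes M :: "'w measure" and H G :: "'w \<Rightarrow> real"
  assumes "prob_space M" "\<forall>\<omega>\<in>space M. 0 \<le> H \<omega>" "\<forall>\<omega>\<in>space M. 0 \<le> G \<omega>"
    and "H \<in> borel_measurable M" "distributed M lborel G (\<lambda>x. ennreal (p x))"
    and "prob_space.indep_var M borel H borel G"
    and "c = 2 powr (2 * Rc) - 1" "0 < Rc" "0 \<le> Rs"
  shows "ED_s M H G Rs Rc = (\<integral>\<omega>. Dd 0 (G \<omega>) \<partial>M)
    - (\<integral>\<omega>. indicator {c<..} (H \<omega>) \<partial>M) * expected_gain (side_info_threshold Rs Rc)"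
  unfolding expected_gain_side_info_threshold[OF assms(7,8)]
  unfolding assms(7)
  by (rule ED_s_eq[OF assms(1) _ assms(4) _ assms(5) nonneg assms(6,8,9)])
    (use assms(2,3) in auto)

end

theorem lemma2:
  fixes M :: "'w measure" and H G :: "'w \<Rightarrow> real"
    and pH pG :: "real \<Rightarrow> real" and Rc a :: real
  assumes "prob_space M"
    and "\<forall>\<omega>\<in>space M. 0 \<le> H \<omega>" and "\<forall>\<omega>\<in>space M. 0 \<le> G \<omega>"
    and "\<forall>x. 0 \<le> pH x" and "\<forall>x. 0 \<le> pG x"
    and "distributed M lborel H (\<lambda>x. ennreal (pH x))"
    and "distributed M lborel G (\<lambda>x. ennreal (pG x))"
    and "prob_space.indep_var M borel H borel G"
    and "continuous_on {0..} pG" and "quasiconcave_nonneg pG"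
    and "Rc > 0"
    and "target_alpha pG Rc a"
  shows "let Rs = 1/2 * log 2 (1 + (1 + gamma_l pG a) * (2 powr (2 * Rc) - 1)) - Rc
         in 0 \<le> Rs \<and> (\<forall>Rs'. 0 \<le> Rs' \<longrightarrow> ED_s M H G Rs Rc \<le> ED_s M H G Rs' Rc)"
proof -
  define c where "c = 2 powr (2 * Rc) - 1"
  have pG: "\<And>x. 0 \<le> pG x" using assms(5) by simp
  interpret side_info_gain pG c
    using distributed_nonneg_density[OF assms(1,3,7) pG] pG assms(9-11)
    by unfold_locales (simp_all add: c_def)
  define t where "t = gamma_l pG a"
  have "a \<le> Sup (pG ` {0..})" using assms(12) by (simp add: target_alpha_def)
  note t = gamma_l_super_level[OF this, folded t_def]
  have "excess (level t) a t = 0"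
    unfolding t_def by (rule excess_target_alpha[OF c_def assms(12)])
  then have gain_max: "expected_gain T \<le> expected_gain t" if "0 \<le> T" for T
    using t that by (intro expected_gain_le_target) auto
  define Rs where "Rs = 1/2 * log 2 (1 + (1 + t) * c) - Rc"
  have Rs: "0 \<le> Rs" "side_info_threshold Rs Rc = t"
    using side_info_threshold_rate[OF assms(11) t(1)] by (simp_all add: Rs_def c_def)
  have "H \<in> borel_measurable M" using distributed_measurable[OF assms(6)] by simp
  note ED_s = ED_s_eq_expected_gain[OF assms(1-3) this assms(7,8) c_def assms(11)]
  have "0 \<le> (\<integral>\<omega>. indicator {c<..} (H \<omega>) \<partial>M :: real)" by simp
  then have "ED_s M H G Rs Rc \<le> ED_s M H G Rs' Rc" if "0 \<le> Rs'" for Rs'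
    using ED_s[OF Rs(1)] ED_s[OF that] Rs(2)
      gain_max[OF side_info_threshold_nonneg[OF assms(11) that]]
    by (simp add: mult_left_mono)
  then show ?thesis using Rs(1) by (simp add: Let_def Rs_def t_def c_def)
qed

end
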